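(* Let $p\geq1$ and let $l,y,l',y'\in D(\mathbb{R}^+,\mathbb{R}^d)$ be such that $l_0\leq y_0$ and $l'_0\leq y'_0$. Let $(x,k)=SP_l(y)$ and $(x',k')=SP_{l'}(y')$. Then for any $T\in\mathbb{R}^+$, \[ V_p(x-x')_T\leq (d+1)V_p(y-y')_T+d|y_0-y'_0|+dV_p(l-l')_T+d|l_0-l'_0| \] and \[ V_p(k-k')_T\leq dV_p(y-y')_T+d|y_0-y'_0|+dV_p(l-l')_T+d|l_0-l'_0|. \]
   Context: $\mathbb{R}^+=[0,\infty)$; $D(\mathbb{R}^+,\mathbb{R}^d)$ is the space of càdlàg functions $\mathbb{R}^+\to\mathbb{R}^d$. For such $x$, $v_p(x)_{[a,b]}=\sup\sum_{i=1}^n|x_{t_i}-x_{t_{i-1}}|^p$ over subdivisions $a=t_0<\dots<t_n=b$ ($|\cdot|$ Euclidean norm), $V_p(x)_{[a,b]}=(v_p(x)_{[a,b]})^{1/p}$ and $V_p(x)_T=V_p(x)_{[0,T]}$. For vectors, $u\leq v$ means $u^i\leq v^i$ for all components; for functions, $x\leq x'$ means $x_t\leq x'_t$ for all $t$. Skorokhod problem: given $y,l\in D(\mathbb{R}^+,\mathbb{R}^d)$ with $l_0\leq y_0$, a pair $(x,k)$ of elements of $D(\mathbb{R}^+,\mathbb{R}^d)$ is a solution of the Skorokhod problem associated with $y$ and lower barrier $l$, written $(x,k)=SP_l(y)$, if (i) $x_t=y_t+k_t\geq l_t$ for all $t\in\mathbb{R}^+$; (ii) $k_0=0$, each component $k^i$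 is nondecreasing and $\int_0^t(x^i_s-l^i_s)\,dk^i_s=0$ for all $t$ and $i=1,\dots,d$. *)

theory Defs
  imports "HOL-Analysis.Analysis" "HOL-Probability.Probability"
begin

text \<open>Functions on R+ with values in R^d are modelled as real => real^'n, d = CARD('n);
only their values on [0,inf) matter.  The norm on real^'n is the Euclidean norm.\<close>

definition cadlag :: "(real \<Rightarrow> real^'n) \<Rightarrow> bool" where
  "cadlag f \<longleftrightarrow>
     (\<forall>t\<ge>0. (f \<longlongrightarrow> f t) (at_right t)) \<and>
     (\<forall>t>0. \<exists>L. (f \<longlongrightarrow> L) (at_left t))"

definition pvar :: "real \<Rightarrow> (real \<Rightarrow> real^'n) \<Rightarrow> real \<Rightarrow> real \<Rightarrow> ereal" where
  "pvar p x a b = Sup { ereal (\<Sum>i<n. norm (x (t (Suc i)) - x (t i)) powr p) | n t.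
      t 0 = a \<and> t n = b \<and> (\<forall>i<n. t i < t (Suc i)) }"

definition Vp :: "real \<Rightarrow> (real \<Rightarrow> real^'n) \<Rightarrow> real \<Rightarrow> real \<Rightarrow> ereal" where
  "Vp p x a b = (if pvar p x a b = \<infinity> then \<infinity> else ereal (real_of_ereal (pvar p x a b) powr (1/p)))"

text \<open>The integral
  int_0^t (x^i - l^i) dk^i is the Lebesgue-Stieltjes integral over (0,t] w.r.t. the
  nondecreasing right-continuous function k^i (no atom at 0 since k_0 = 0); the integrand
  is nonnegative, so it is taken as a nonnegative integral.\<close>
definition SP :: "(real \<Rightarrow> real^'n) \<Rightarrow> (real \<Rightarrow> real^'n) \<Rightarrow> (real \<Rightarrow> real^'n) \<Rightarrow> (real \<Rightarrow> real^'n) \<Rightarrow> bool" where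
  "SP l y x k \<longleftrightarrow>
     cadlag x \<and> cadlag k \<and>
     (\<forall>t\<ge>0. x t = y t + k t \<and> (\<forall>i. l t $ i \<le> x t $ i)) \<and>
     k 0 = 0 \<and>
     (\<forall>i. mono_on {0..} (\<lambda>t. k t $ i)) \<and>
     (\<forall>i. \<forall>t\<ge>0. (\<integral>\<^sup>+ s. ennreal (x s $ i - l s $ i) * indicator {0<..t} s
          \<partial>(interval_measure (\<lambda>s. k (max s 0) $ i))) = 0)"

end

theory Submission
  imports Defs
begin

text \<open>Fix a coordinate \<open>i\<close> and put \<open>f = k\<^sup>i - k'\<^sup>i\<close> and \<open>W = (l\<^sup>i - y\<^sup>i) - (l'\<^sup>i - y'\<^sup>i)\<close>.
  Since \<open>k\<^sup>i\<close> only increases while \<open>x\<^sup>i\<close> sits on the barrier, i.e. while \<open>k\<^sup>i = l\<^sup>i - y\<^sup>i\<close>,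
  and always \<open>k'\<^sup>i \<ge> l'\<^sup>i - y'\<^sup>i\<close>, every rise of \<open>f\<close> over a time interval ends (up to any
  \<open>\<epsilon>\<close>) below a value of \<open>W\<close> taken in that interval, and symmetrically for falls.  For
  \<open>p \<ge> 1\<close>, superadditivity of \<open>x\<^sup>p\<close> then lets one merge consecutive moves of \<open>f\<close> in the same
  direction, so that the p-variation sum of \<open>f\<close> along a subdivision is dominated by that of \<open>W\<close>
  along an increasing sequence of times, plus the initial gap \<open>\<bar>W 0\<bar>\<close>.  Hence
  \<open>V\<^sub>p(f) \<le> V\<^sub>p(y - y') + V\<^sub>p(l - l') + |y\<^sub>0 - y'\<^sub>0| + |l\<^sub>0 - l'\<^sub>0|\<close>; Minkowski's inequality over
  the \<open>d\<close> coordinates gives the bound for \<open>k - k'\<close>, and \<open>x - x' = (y - y') + (k - k')\<close> the bound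
  for \<open>x - x'\<close>.\<close>

section \<open>Power sums and Minkowski's inequality\<close>

lemma convex_on_powr_nonneg:
  fixes p :: real
  assumes "1 \<le> p"
  shows "convex_on {0..} (\<lambda>x. x powr p)"
proof (rule convex_on_linorderI)
  fix t x y :: real
  assume t: "0 < t" "t < 1" and xy: "x \<in> {0..}" "y \<in> {0..}" "x < y"
  show "((1 - t) *\<^sub>R x + t *\<^sub>R y) powr p \<le> (1 - t) * x powr p + t * y powr p"
  proof (cases "x = 0")
    case True
    have "(t * y) powr p = t powr p * y powr p"
      using t xy by (simp add: powr_mult)
    also have "\<dots> \<le> t * y powr p"
      using powr_mono'[of 1 p t] t assms by (intro mult_right_mono) auto
    finally show ?thesis using True by simp
  next
    case False
    then show ?thesis
      using convex_onD[OF powr_convex[OF assms], of t x y] t xy by simp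
  qed
qed simp

lemma add_powr_le_powr_add:
  fixes a b p :: real
  assumes "0 \<le> a" "0 \<le> b" "1 \<le> p"
  shows "a powr p + b powr p \<le> (a + b) powr p"
proof (cases "a + b = 0")
  case False
  then have ab: "0 < a + b" using assms by simp
  have le: "x powr p \<le> (a + b) powr p * (x / (a + b))" if "0 \<le> x" "x \<le> a + b" for x
  proof -
    have "x powr p = (a + b) powr p * (x / (a + b)) powr p"
      using ab that by (simp add: powr_divide)
    also have "\<dots> \<le> (a + b) powr p * (x / (a + b))"
      using ab that assms powr_mono'[of 1 p "x / (a + b)"] by (intro mult_left_mono) auto
    finally show ?thesis .
  qed
  have "(a + b) powr p * (a / (a + b)) + (a + b) powr p * (b / (a + b)) = (a + b) powr p"
    using ab by (simp add: add_divide_distrib[symmetric] flip: distrib_left)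
  then show ?thesis using le[of a] le[of b] assms by linarith
qed (use assms in \<open>simp add: add_nonneg_eq_0_iff\<close>)

definition psum :: "real \<Rightarrow> (nat \<Rightarrow> real) \<Rightarrow> nat \<Rightarrow> real" where
  "psum p a N = (\<Sum>s<N. a s powr p)"

definition lpnorm :: "real \<Rightarrow> (nat \<Rightarrow> real) \<Rightarrow> nat \<Rightarrow> real" where
  "lpnorm p a N = psum p a N powr (1 / p)"

lemma psum_nonneg: "0 \<le> psum p a N"
  by (simp add: psum_def sum_nonneg)

lemma lpnorm_nonneg: "0 \<le> lpnorm p a N"
  by (simp add: lpnorm_def)

lemma lpnorm_powr: "0 < p \<Longrightarrow> lpnorm p a N powr p = psum p a N"
  by (simp add: lpnorm_def powr_powr psum_nonneg)

lemma lpnorm_le_iff: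
  assumes "0 < p" "0 \<le> B"
  shows "lpnorm p a N \<le> B \<longleftrightarrow> psum p a N \<le> B powr p"
proof
  assume "lpnorm p a N \<le> B"
  then have "lpnorm p a N powr p \<le> B powr p"
    using assms by (intro powr_mono2) (auto simp: lpnorm_nonneg)
  then show "psum p a N \<le> B powr p" using assms by (simp add: lpnorm_powr)
next
  assume "psum p a N \<le> B powr p"
  then have "lpnorm p a N \<le> (B powr p) powr (1 / p)"
    unfolding lpnorm_def using assms by (intro powr_mono2) (auto simp: psum_nonneg)
  then show "lpnorm p a N \<le> B" using assms by (simp add: powr_powr)
qed

lemma lpnorm_mono:
  assumes "0 < p" "\<And>s. s < N \<Longrightarrow> 0 \<le> a s \<and> a s \<le> b s"
  shows "lpnorm p a N \<le> lpnorm p b N"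
  unfolding lpnorm_def psum_def using assms
  by (intro powr_mono2 sum_mono) (auto simp: sum_nonneg intro!: powr_mono2)

lemma lpnorm_cong: "(\<And>s. s < N \<Longrightarrow> a s = b s) \<Longrightarrow> lpnorm p a N = lpnorm p b N"
  unfolding lpnorm_def psum_def by (metis (mono_tags, lifting) lessThan_iff sum.cong)

lemma lpnorm_le_lpnorm_of_psum_le:
  "0 < p \<Longrightarrow> psum p a N \<le> psum p b M \<Longrightarrow> lpnorm p a N \<le> lpnorm p b M"
  unfolding lpnorm_def by (intro powr_mono2) (auto simp: psum_nonneg)

lemma lpnorm_const_le:
  assumes "1 \<le> p" "0 \<le> c"
  shows "lpnorm p (\<lambda>_. c) N \<le> c * real N"
proof -
  have "psum p (\<lambda>_. c) N = real N * c powr p" by (simp add: psum_def)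
  also have "\<dots> \<le> real N powr p * c powr p"
    using assms powr_mono[of 1 p "real N"] by (cases "N = 0") (auto intro: mult_right_mono)
  also have "\<dots> = (c * real N) powr p" using assms by (simp add: powr_mult)
  finally show ?thesis using assms lpnorm_le_iff[of p "c * real N"] by simp
qed

lemma lpnorm_at_0_le:
  assumes "0 < p" "0 \<le> c"
  shows "lpnorm p (\<lambda>s. if s = 0 then c else 0) N \<le> c"
proof -
  have "psum p (\<lambda>s. if s = 0 then c else 0) N \<le> c powr p"
    by (cases N) (simp_all add: psum_def sum.lessThan_Suc_shift del: sum.lessThan_Suc)
  then show ?thesis using assms lpnorm_le_iff by blast
qed

lemma lpnorm_add_eq_of_lpnorm_eq_0:
  assumes "0 < p" "lpnorm p a N = 0" "\<And>s. s < N \<Longrightarrow> 0 \<le> a s"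
  shows "lpnorm p (\<lambda>s. a s + b s) N = lpnorm p b N"
proof (rule lpnorm_cong)
  have "psum p a N = 0" using assms lpnorm_powr[of p a N] by simp
  then show "a s + b s = b s" if "s < N" for s
    using assms that sum_nonneg_eq_0_iff[of "{..<N}" "\<lambda>s. a s powr p"] by (simp add: psum_def)
qed

text \<open>Minkowski's inequality: normalise both sequences to unit norm and use the convexity
  of \<open>x powr p\<close> with the weights \<open>A/(A+B)\<close> and \<open>B/(A+B)\<close>.\<close>
lemma lpnorm_add_le:
  assumes p: "1 \<le> p" and nonneg: "\<And>s. s < N \<Longrightarrow> 0 \<le> a s \<and> 0 \<le> b s"
  shows "lpnorm p (\<lambda>s. a s + b s) N \<le> lpnorm p a N + lpnorm p b N"
proof -
  define A B where "A = lpnorm p a N" and "B = lpnorm p b N"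
  consider "A = 0" | "B = 0" | "0 < A" "0 < B"
    using lpnorm_nonneg[of p a N] lpnorm_nonneg[of p b N] unfolding A_def B_def by linarith
  then show ?thesis
  proof cases
    case 1
    then show ?thesis using lpnorm_add_eq_of_lpnorm_eq_0[of p a N b] p nonneg by (simp add: A_def)
  next
    case 2
    then show ?thesis using lpnorm_add_eq_of_lpnorm_eq_0[of p b N a] p nonneg by (simp add: B_def add.commute)
  next
    case 3
    define w where "w = B / (A + B)"
    have psum_eq: "psum p a N = A powr p" "psum p b N = B powr p"
      using p by (simp_all add: A_def B_def lpnorm_powr)
    have w: "0 \<le> w" "w \<le> 1" "1 - w = A / (A + B)" using 3 by (auto simp: w_def field_simps)
    have "psum p (\<lambda>s. (a s + b s) / (A + B)) N
        \<le> (\<Sum>s<N. (1 - w) * (a s / A) powr p + w * (b s / B) powr p)"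
      unfolding psum_def
    proof (rule sum_mono)
      fix s assume "s \<in> {..<N}"
      then have "0 \<le> a s" "0 \<le> b s" using nonneg by auto
      moreover have "(a s + b s) / (A + B) = (1 - w) *\<^sub>R (a s / A) + w *\<^sub>R (b s / B)"
        unfolding w(3) using 3 by (simp add: w_def add_divide_distrib)
      ultimately show "((a s + b s) / (A + B)) powr p \<le> (1 - w) * (a s / A) powr p + w * (b s / B) powr p"
        using convex_onD[OF convex_on_powr_nonneg[OF p], of w "a s / A" "b s / B"] w 3 by simp
    qed
    also have "\<dots> = (1 - w) * (psum p a N / A powr p) + w * (psum p b N / B powr p)"
      using 3 by (simp add: psum_def sum.distrib sum_distrib_left sum_divide_distrib powr_divide)
    also have "\<dots> = 1"
      using 3 by (simp add: psum_eq)
    finally have "psum p (\<lambda>s. a s + b s) N / (A + B) powr p \<le> 1"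
      using 3 nonneg by (simp add: psum_def sum_divide_distrib powr_divide)
    then have "psum p (\<lambda>s. a s + b s) N \<le> (A + B) powr p"
      using 3 by (simp add: divide_le_eq_1)
    then show ?thesis using lpnorm_le_iff[of p "A + B"] 3 p A_def B_def by simp
  qed
qed

lemma lpnorm_le_add:
  assumes "1 \<le> p" "\<And>s. s < N \<Longrightarrow> 0 \<le> a s \<and> 0 \<le> b s \<and> 0 \<le> c s \<and> c s \<le> a s + b s"
  shows "lpnorm p c N \<le> lpnorm p a N + lpnorm p b N"
  using lpnorm_mono[of p N c "\<lambda>s. a s + b s"] lpnorm_add_le[of p N a b] assms by fastforce

lemma lpnorm_sum_le:
  assumes "finite I" "1 \<le> p" "\<And>i s. i \<in> I \<Longrightarrow> s < N \<Longrightarrow> 0 \<le> c i s"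
  shows "lpnorm p (\<lambda>s. \<Sum>i\<in>I. c i s) N \<le> (\<Sum>i\<in>I. lpnorm p (c i) N)"
  using assms
proof (induction I rule: finite_induct)
  case empty
  then show ?case by (simp add: lpnorm_def psum_def)
next
  case (insert i I)
  have "lpnorm p (\<lambda>s. c i s + (\<Sum>j\<in>I. c j s)) N \<le> lpnorm p (c i) N + lpnorm p (\<lambda>s. \<Sum>j\<in>I. c j s) N"
    using insert.prems by (intro lpnorm_add_le) (auto intro: sum_nonneg)
  then show ?case using insert by simp
qed

section \<open>Increments along chains and p-variation\<close>

definition increments :: "('b \<Rightarrow> 'a::real_normed_vector) \<Rightarrow> (nat \<Rightarrow> 'b) \<Rightarrow> nat \<Rightarrow> real" where
  "increments g q s = norm (g (q (Suc s)) - g (q s))"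

definition subdivision :: "real \<Rightarrow> real \<Rightarrow> (nat \<Rightarrow> real) \<Rightarrow> nat \<Rightarrow> bool" where
  "subdivision a b t n \<longleftrightarrow> t 0 = a \<and> t n = b \<and> (\<forall>i<n. t i < t (Suc i))"

definition chain_in :: "real \<Rightarrow> real \<Rightarrow> (nat \<Rightarrow> real) \<Rightarrow> nat \<Rightarrow> bool" where
  "chain_in a b q N \<longleftrightarrow> q 0 = a \<and> (\<forall>s<N. q s \<le> q (Suc s)) \<and> q N \<le> b"

lemma increments_nonneg: "0 \<le> increments g q s"
  by (simp add: increments_def)

lemma increments_comp_id: "increments (\<lambda>j. f (t j)) id = increments f t"
  by (simp add: fun_eq_iff increments_def)

lemma pvar_eq_Sup: "pvar p g a b = Sup {ereal (psum p (increments g t) n) | n t. subdivision a b t n}"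
  by (simp add: pvar_def psum_def increments_def subdivision_def)

lemma chain_mono:
  assumes "\<forall>s<N. q s \<le> q (Suc s)" "i \<le> j" "j \<le> N"
  shows "q i \<le> (q j :: real)"
  using assms(2,3)
proof (induction j)
  case (Suc j)
  then show ?case using assms(1) by (cases "i = Suc j") (auto intro: order.trans)
qed simp

lemma subdivision_imp_chain_in: "subdivision a b t n \<Longrightarrow> chain_in a b t n"
  by (simp add: subdivision_def chain_in_def less_imp_le)

lemma subdivision_extend:
  assumes t: "subdivision a b t n" and "b \<le> c"
  obtains t' n' where "subdivision a c t' n'"
    "psum p (increments g t) n + norm (g c - g b) powr p \<le> psum p (increments g t') n'"
proof (cases "b = c")
  case True
  then show thesis using that[of t n] t by simp
next
  case False
  then have "b < c" using \<open>b \<le> c\<close> by simp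
  have "psum p (increments g (t(Suc n := c))) n = psum p (increments g t) n"
    unfolding psum_def increments_def by (intro sum.cong) auto
  then have "psum p (increments g (t(Suc n := c))) (Suc n) = psum p (increments g t) n + norm (g c - g b) powr p"
    using t by (simp add: psum_def increments_def subdivision_def)
  moreover have "subdivision a c (t(Suc n := c)) (Suc n)"
    using t \<open>b < c\<close> by (auto simp: subdivision_def less_Suc_eq)
  ultimately show thesis using that by simp
qed

text \<open>Repeated points of a chain contribute nothing, so every chain is dominated by a
  subdivision.\<close>
lemma subdivision_dominates_chain:
  assumes q: "chain_in a b q N"
  obtains t n where "subdivision a b t n" "psum p (increments g q) N \<le> psum p (increments g t) n"
proof -
  have "\<exists>t n. subdivision a (q M) t n \<and> psum p (increments g q) M \<le> psum p (increments g t) n"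
    if "M \<le> N" for M
    using that
  proof (induction M)
    case 0
    have "subdivision a (q 0) q 0" using q by (simp add: subdivision_def chain_in_def)
    then show ?case by (intro exI[of _ q] exI[of _ 0]) (simp add: psum_def)
  next
    case (Suc M)
    then obtain t n where t: "subdivision a (q M) t n" "psum p (increments g q) M \<le> psum p (increments g t) n"
      by auto
    have "q M \<le> q (Suc M)" using q Suc.prems by (simp add: chain_in_def)
    then obtain t' n' where "subdivision a (q (Suc M)) t' n'"
      "psum p (increments g t) n + norm (g (q (Suc M)) - g (q M)) powr p \<le> psum p (increments g t') n'"
      using subdivision_extend[OF t(1)] by blast
    then show ?case using t(2) by (intro exI[of _ t'] exI[of _ n']) (simp add: psum_def increments_def)
  qed
  then obtain t n where t: "subdivision a (q N) t n" "psum p (increments g q) N \<le> psum p (increments g t) n"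
    by blast
  have "q N \<le> b" using q by (simp add: chain_in_def)
  then obtain t' n' where "subdivision a b t' n'"
    "psum p (increments g t) n + norm (g b - g (q N)) powr p \<le> psum p (increments g t') n'"
    using subdivision_extend[OF t(1)] by blast
  then show thesis using that[of t' n'] t(2) by (smt (verit) powr_ge_zero)
qed

lemma psum_le_pvar:
  assumes "chain_in a b q N"
  shows "ereal (psum p (increments g q) N) \<le> pvar p g a b"
proof -
  obtain t n where "subdivision a b t n" "psum p (increments g q) N \<le> psum p (increments g t) n"
    using subdivision_dominates_chain[OF assms] .
  then show ?thesis
    unfolding pvar_eq_Sup by (intro Sup_upper2[of "ereal (psum p (increments g t) n)"]) auto
qed

lemma pvar_nonneg: "a \<le> b \<Longrightarrow> 0 \<le> pvar p g a b"
  using psum_le_pvar[of a b "\<lambda>_. a" 0 p g] by (simp add: chain_in_def psum_def zero_ereal_def)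

lemma Vp_nonneg: "0 \<le> Vp p g a b"
  by (simp add: Vp_def)

lemma Vp_real_nonneg: "Vp p g a b = ereal V \<Longrightarrow> 0 \<le> V"
  by (auto simp: Vp_def split: if_splits)

lemma Vp_finite_imp_ereal: "Vp p g a b \<noteq> \<infinity> \<Longrightarrow> \<exists>V. Vp p g a b = ereal V"
  by (auto simp: Vp_def)

lemma lpnorm_increments_le_Vp:
  assumes "0 < p" "a \<le> b" "Vp p g a b = ereal V" "chain_in a b q N"
  shows "lpnorm p (increments g q) N \<le> V"
proof -
  have fin: "pvar p g a b \<noteq> \<infinity>" using assms(3) by (auto simp: Vp_def split: if_splits)
  have le: "ereal (psum p (increments g q) N) \<le> pvar p g a b" using psum_le_pvar[OF assms(4)] .
  obtain r where r: "pvar p g a b = ereal r" using fin le by (cases "pvar p g a b") auto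
  have "V = r powr (1 / p)" using assms(3) r by (simp add: Vp_def)
  then have "V powr p = r" using assms(1) pvar_nonneg[OF assms(2), of p g] r by (simp add: powr_powr)
  then show ?thesis
    using le r lpnorm_le_iff[OF assms(1) Vp_real_nonneg[OF assms(3)]] by simp
qed

lemma Vp_le_ereal:
  assumes "0 < p" "a \<le> b" "0 \<le> B"
    and bound: "\<And>t n. subdivision a b t n \<Longrightarrow> lpnorm p (increments g t) n \<le> B"
  shows "Vp p g a b \<le> ereal B"
proof -
  have "pvar p g a b \<le> ereal (B powr p)"
    unfolding pvar_eq_Sup using bound lpnorm_le_iff[OF assms(1,3)] by (auto intro!: Sup_least)
  then obtain r where r: "pvar p g a b = ereal r" "0 \<le> r" "r \<le> B powr p"
    using pvar_nonneg[OF assms(2), of p g] by (cases "pvar p g a b") auto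
  have "r powr (1 / p) \<le> (B powr p) powr (1 / p)" using r assms by (intro powr_mono2) auto
  then show ?thesis using r assms by (simp add: Vp_def powr_powr)
qed

lemma lpnorm_increments_add_le:
  assumes "1 \<le> p"
  shows "lpnorm p (increments (\<lambda>s. g s + h s) q) N \<le> lpnorm p (increments g q) N + lpnorm p (increments h q) N"
  using assms by (intro lpnorm_le_add) (auto simp: increments_def norm_diff_triangle_ineq)

lemma lpnorm_increments_component_diff_le:
  fixes g h :: "real \<Rightarrow> real^'n"
  assumes "1 \<le> p"
  shows "lpnorm p (increments (\<lambda>s. g s $ i - h s $ i) q) N
    \<le> lpnorm p (increments g q) N + lpnorm p (increments h q) N"
proof (rule lpnorm_le_add[OF assms])
  fix s
  let ?G = "g (q (Suc s)) - g (q s)" and ?H = "h (q (Suc s)) - h (q s)"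
  have "increments (\<lambda>s. g s $ i - h s $ i) q s = \<bar>?G $ i - ?H $ i\<bar>"
    by (simp add: increments_def algebra_simps)
  also have "\<dots> \<le> norm ?G + norm ?H"
    using component_le_norm_cart[of ?G i] component_le_norm_cart[of ?H i] by linarith
  finally show "0 \<le> increments g q s \<and> 0 \<le> increments h q s \<and> 0 \<le> increments (\<lambda>s. g s $ i - h s $ i) q s
      \<and> increments (\<lambda>s. g s $ i - h s $ i) q s \<le> increments g q s + increments h q s"
    by (simp add: increments_def)
qed

lemma lpnorm_increments_le_sum_components:
  fixes g :: "real \<Rightarrow> real^'n"
  assumes "1 \<le> p"
  shows "lpnorm p (increments g q) N \<le> (\<Sum>i\<in>UNIV. lpnorm p (increments (\<lambda>s. g s $ i) q) N)"
proof -
  have "lpnorm p (increments g q) N \<le> lpnorm p (\<lambda>s. \<Sum>i\<in>UNIV. increments (\<lambda>s. g s $ i) q s) N"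
  proof (rule lpnorm_mono)
    fix s
    show "0 \<le> increments g q s \<and> increments g q s \<le> (\<Sum>i\<in>UNIV. increments (\<lambda>s. g s $ i) q s)"
      using norm_le_l1_cart[of "g (q (Suc s)) - g (q s)"] by (simp add: increments_def)
  qed (use assms in simp)
  also have "\<dots> \<le> (\<Sum>i\<in>UNIV. lpnorm p (increments (\<lambda>s. g s $ i) q) N)"
    using assms by (intro lpnorm_sum_le) (auto simp: increments_nonneg)
  finally show ?thesis .
qed

lemma lpnorm_increments_perturbed_le:
  fixes e w :: "nat \<Rightarrow> real"
  assumes p: "1 \<le> p" and "0 \<le> \<epsilon>" and close: "\<And>s. 0 < s \<Longrightarrow> \<bar>e s - w s\<bar> \<le> \<epsilon>"
  shows "lpnorm p (increments e id) m \<le> \<bar>w 0 - e 0\<bar> + lpnorm p (increments w id) m + 2 * \<epsilon> * real m"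
proof -
  define B :: "nat \<Rightarrow> real" where "B = (\<lambda>s. if s = 0 then \<bar>w 0 - e 0\<bar> else 0)"
  have step: "increments e id s \<le> (increments w id s + B s) + 2 * \<epsilon>" for s
    using close[of s] close[of "Suc s"] \<open>0 \<le> \<epsilon>\<close> by (cases "s = 0") (auto simp: increments_def B_def)
  have "lpnorm p (increments e id) m \<le> lpnorm p (\<lambda>s. increments w id s + B s) m + lpnorm p (\<lambda>_. 2 * \<epsilon>) m"
    using p step \<open>0 \<le> \<epsilon>\<close> by (intro lpnorm_le_add) (auto simp: increments_nonneg B_def)
  also have "\<dots> \<le> (lpnorm p (increments w id) m + lpnorm p B m) + 2 * \<epsilon> * real m"
    using p \<open>0 \<le> \<epsilon>\<close> by (intro add_mono lpnorm_add_le lpnorm_const_le) (auto simp: increments_nonneg B_def)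
  also have "\<dots> \<le> (lpnorm p (increments w id) m + \<bar>w 0 - e 0\<bar>) + 2 * \<epsilon> * real m"
    using p lpnorm_at_0_le[of p] by (simp add: B_def)
  finally show ?thesis by simp
qed

section \<open>Chains of overshoot points\<close>

definition overshoot_chain :: "(nat \<Rightarrow> real) \<Rightarrow> (nat \<Rightarrow> real) \<Rightarrow> (nat \<Rightarrow> nat) \<Rightarrow> nat \<Rightarrow> real" where
  "overshoot_chain g C js s = (if s = 0 then g 0 else C (js s))"

text \<open>Invariant of the greedy construction of the chain along \<open>g\<close>: a move of \<open>g\<close> continuing the
  last jump of the chain pushes that jump on to the new overshoot point, any other move appends
  one.  For \<open>m = 0\<close> the truncated \<open>m - 1\<close> makes the last jump the degenerate one at \<open>g 0\<close>.\<close>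
definition overshoot_invariant ::
    "real \<Rightarrow> (nat \<Rightarrow> real) \<Rightarrow> (nat \<Rightarrow> real) \<Rightarrow> nat \<Rightarrow> nat \<Rightarrow> (nat \<Rightarrow> nat) \<Rightarrow> bool" where
  "overshoot_invariant p g C n m js \<longleftrightarrow>
     m \<le> n \<and> (\<forall>s\<in>{1..m}. js s < n) \<and> (\<forall>s\<in>{1..<m}. js s < js (Suc s)) \<and>
     g n \<in> closed_segment (overshoot_chain g C js (m - 1)) (overshoot_chain g C js m) \<and>
     psum p (increments g id) n
       \<le> psum p (increments (overshoot_chain g C js) id) (m - 1)
         + \<bar>g n - overshoot_chain g C js (m - 1)\<bar> powr p"

lemma psum_increments_Suc:
  "psum p (increments e id) (Suc m) = psum p (increments e id) m + norm (e (Suc m) - e m) powr p"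
  by (simp add: psum_def increments_def)

lemma psum_increments_pred:
  "psum p (increments e id) m = psum p (increments e id) (m - 1) + norm (e m - e (m - 1)) powr p"
  by (cases m) (simp_all add: psum_def increments_def)

lemma psum_increments_cong:
  "(\<And>s. s \<le> m \<Longrightarrow> e s = e' s) \<Longrightarrow> psum p (increments e id) m = psum p (increments e' id) m"
  unfolding psum_def increments_def by (intro sum.cong) auto

lemma overshoot_invariant_stay:
  assumes "overshoot_invariant p g C n m js" "g (Suc n) = g n"
  shows "overshoot_invariant p g C (Suc n) m js"
  using assms by (auto simp: overshoot_invariant_def psum_increments_Suc)

text \<open>Superadditivity of \<open>x powr p\<close> pays for merging the two moves into one jump.\<close>
lemma overshoot_invariant_extend:
  assumes p: "1 \<le> p" and inv: "overshoot_invariant p g C n m js" and m: "0 < m"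
    and dir: "g n < g (Suc n) \<and> overshoot_chain g C js (m - 1) \<le> g n
      \<or> g (Suc n) < g n \<and> g n \<le> overshoot_chain g C js (m - 1)"
    and over: "(g n < g (Suc n) \<longrightarrow> g (Suc n) \<le> C n) \<and> (g (Suc n) < g n \<longrightarrow> C n \<le> g (Suc n))"
  shows "overshoot_invariant p g C (Suc n) m (js(m := n))"
proof -
  let ?e = "overshoot_chain g C js" and ?e' = "overshoot_chain g C (js(m := n))"
  have same: "?e' s = ?e s" if "s < m" for s
    using that by (simp add: overshoot_chain_def)
  have last: "?e' (m - 1) = ?e (m - 1)" using same m by simp
  have new: "?e' m = C n" using m by (simp add: overshoot_chain_def)
  have "psum p (increments g id) (Suc n)
      \<le> psum p (increments ?e id) (m - 1) + (\<bar>g n - ?e (m - 1)\<bar> powr p + \<bar>g (Suc n) - g n\<bar> powr p)"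
    using inv by (simp add: overshoot_invariant_def psum_increments_Suc)
  also have "\<dots> \<le> psum p (increments ?e id) (m - 1) + (\<bar>g n - ?e (m - 1)\<bar> + \<bar>g (Suc n) - g n\<bar>) powr p"
    using p by (intro add_left_mono add_powr_le_powr_add) auto
  also have "\<bar>g n - ?e (m - 1)\<bar> + \<bar>g (Suc n) - g n\<bar> = \<bar>g (Suc n) - ?e' (m - 1)\<bar>"
    unfolding last using dir by auto
  also have "psum p (increments ?e id) (m - 1) = psum p (increments ?e' id) (m - 1)"
    using m by (intro psum_increments_cong) (simp add: same)
  finally have sum: "psum p (increments g id) (Suc n)
      \<le> psum p (increments ?e' id) (m - 1) + \<bar>g (Suc n) - ?e' (m - 1)\<bar> powr p" .
  have seg: "g (Suc n) \<in> closed_segment (?e' (m - 1)) (?e' m)"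
    unfolding last new using dir over by (auto simp: closed_segment_eq_real_ivl)
  have "m \<le> Suc n \<and> (\<forall>s\<in>{1..m}. (js(m := n)) s < Suc n)
      \<and> (\<forall>s\<in>{1..<m}. (js(m := n)) s < (js(m := n)) (Suc s))"
    using inv by (auto simp: overshoot_invariant_def less_Suc_eq)
  then show ?thesis using sum seg by (simp add: overshoot_invariant_def)
qed

lemma overshoot_invariant_append:
  assumes p: "1 \<le> p" and inv: "overshoot_invariant p g C n m js" and move: "g (Suc n) \<noteq> g n"
    and dir: "m = 0 \<or> \<not> (g n < g (Suc n) \<and> overshoot_chain g C js (m - 1) \<le> g n
      \<or> g (Suc n) < g n \<and> g n \<le> overshoot_chain g C js (m - 1))"
    and over: "(g n < g (Suc n) \<longrightarrow> g (Suc n) \<le> C n) \<and> (g (Suc n) < g n \<longrightarrow> C n \<le> g (Suc n))"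
  shows "overshoot_invariant p g C (Suc n) (Suc m) (js(Suc m := n))"
proof -
  let ?e = "overshoot_chain g C js" and ?e' = "overshoot_chain g C (js(Suc m := n))"
  have same: "?e' s = ?e s" if "s \<le> m" for s
    using that by (simp add: overshoot_chain_def)
  have last: "?e' m = ?e m" using same by simp
  have new: "?e' (Suc m) = C n" by (simp add: overshoot_chain_def)
  have seg: "g n \<in> closed_segment (?e (m - 1)) (?e m)"
    using inv by (simp add: overshoot_invariant_def)
  have turn: "(g n < g (Suc n) \<longrightarrow> ?e m \<le> g n) \<and> (g (Suc n) < g n \<longrightarrow> g n \<le> ?e m)"
    using dir seg by (cases "m = 0") (auto simp: closed_segment_eq_real_ivl split: if_splits)
  have "psum p (increments g id) (Suc n)
      \<le> psum p (increments ?e id) (m - 1) + \<bar>g n - ?e (m - 1)\<bar> powr p + \<bar>g (Suc n) - g n\<bar> powr p"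
    using inv by (simp add: overshoot_invariant_def psum_increments_Suc)
  also have "\<dots> \<le> psum p (increments ?e id) (m - 1) + \<bar>?e m - ?e (m - 1)\<bar> powr p
      + \<bar>g (Suc n) - ?e m\<bar> powr p"
    using p seg turn by (intro add_mono powr_mono2 order.refl)
      (auto simp: closed_segment_eq_real_ivl split: if_splits)
  also have "psum p (increments ?e id) (m - 1) + \<bar>?e m - ?e (m - 1)\<bar> powr p = psum p (increments ?e' id) m"
    using psum_increments_pred[of p ?e m] psum_increments_cong[of m ?e' ?e p] same by simp
  finally have sum: "psum p (increments g id) (Suc n)
      \<le> psum p (increments ?e' id) (Suc m - 1) + \<bar>g (Suc n) - ?e' (Suc m - 1)\<bar> powr p"
    by (simp only: diff_Suc_1 last)
  have seg': "g (Suc n) \<in> closed_segment (?e' (Suc m - 1)) (?e' (Suc m))"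
    unfolding diff_Suc_1 last new using move turn over by (auto simp: closed_segment_eq_real_ivl)
  have "Suc m \<le> Suc n \<and> (\<forall>s\<in>{1..Suc m}. (js(Suc m := n)) s < Suc n)
      \<and> (\<forall>s\<in>{1..<Suc m}. (js(Suc m := n)) s < (js(Suc m := n)) (Suc s))"
    using inv by (auto simp: overshoot_invariant_def less_Suc_eq le_Suc_eq)
  then show ?thesis using sum seg' by (simp add: overshoot_invariant_def)
qed

lemma psum_increments_le_overshoot_chain:
  fixes g C :: "nat \<Rightarrow> real"
  assumes p: "1 \<le> p"
    and over: "\<And>j. j < n \<Longrightarrow> (g j < g (Suc j) \<longrightarrow> g (Suc j) \<le> C j) \<and> (g (Suc j) < g j \<longrightarrow> C j \<le> g (Suc j))"
  obtains m js where "m \<le> n" "\<forall>s\<in>{1..m}. js s < n" "\<forall>s\<in>{1..<m}. js s < js (Suc s)"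
    "psum p (increments g id) n \<le> psum p (increments (overshoot_chain g C js) id) m"
proof -
  have "\<exists>m js. overshoot_invariant p g C k m js" if "k \<le> n" for k
    using that
  proof (induction k)
    case 0
    show ?case by (auto simp: overshoot_invariant_def overshoot_chain_def psum_def)
  next
    case (Suc k)
    then obtain m js where inv: "overshoot_invariant p g C k m js" by auto
    have o: "(g k < g (Suc k) \<longrightarrow> g (Suc k) \<le> C k) \<and> (g (Suc k) < g k \<longrightarrow> C k \<le> g (Suc k))"
      using over Suc.prems by simp
    show ?case
      using overshoot_invariant_stay[OF inv] overshoot_invariant_extend[OF p inv _ _ o]
        overshoot_invariant_append[OF p inv _ _ o] by blast
  qed
  then obtain m js where inv: "overshoot_invariant p g C n m js" by blast
  let ?e = "overshoot_chain g C js"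
  have "\<bar>g n - ?e (m - 1)\<bar> \<le> \<bar>?e m - ?e (m - 1)\<bar>"
    using inv by (auto simp: overshoot_invariant_def closed_segment_eq_real_ivl split: if_splits)
  then have "psum p (increments g id) n \<le> psum p (increments ?e id) (m - 1) + \<bar>?e m - ?e (m - 1)\<bar> powr p"
    using inv p by (smt (verit, best) abs_ge_zero overshoot_invariant_def powr_mono2)
  then show thesis
    using that[of m js] inv psum_increments_pred[of p ?e m] by (simp add: overshoot_invariant_def)
qed

section \<open>Functions pushed by a barrier\<close>

definition pushed_by :: "(real \<Rightarrow> real) \<Rightarrow> (real \<Rightarrow> real) \<Rightarrow> real \<Rightarrow> real \<Rightarrow> bool" where
  "pushed_by f W a b \<longleftrightarrow> (\<forall>\<epsilon>>0.
     (f a < f b \<longrightarrow> (\<exists>u\<in>{a<..b}. f b \<le> W u + \<epsilon>)) \<and>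
     (f b < f a \<longrightarrow> (\<exists>u\<in>{a<..b}. W u - \<epsilon> \<le> f b)))"

lemma pushed_by_overshoot_points:
  assumes pushed: "\<And>j. j < n \<Longrightarrow> pushed_by f W (t j) (t (Suc j))"
    and t: "\<And>j. j < n \<Longrightarrow> t j < t (Suc j)" and "0 < \<epsilon>"
  obtains u C where "\<And>j. j < n \<Longrightarrow> u j \<in> {t j<..t (Suc j)}" "\<And>j. \<bar>C j - W (u j)\<bar> \<le> \<epsilon>"
    "\<And>j. j < n \<Longrightarrow> (f (t j) < f (t (Suc j)) \<longrightarrow> f (t (Suc j)) \<le> C j)
        \<and> (f (t (Suc j)) < f (t j) \<longrightarrow> C j \<le> f (t (Suc j)))"
proof -
  have "\<exists>u\<in>{t j<..t (Suc j)}. (f (t j) < f (t (Suc j)) \<longrightarrow> f (t (Suc j)) \<le> W u + \<epsilon>)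
      \<and> (f (t (Suc j)) < f (t j) \<longrightarrow> W u - \<epsilon> \<le> f (t (Suc j)))" if "j < n" for j
    using pushed[OF that] t[OF that] \<open>0 < \<epsilon>\<close> unfolding pushed_by_def
    by (cases "f (t j)" "f (t (Suc j))" rule: linorder_cases) auto
  then obtain u where u: "\<And>j. j < n \<Longrightarrow> u j \<in> {t j<..t (Suc j)} \<and>
      (f (t j) < f (t (Suc j)) \<longrightarrow> f (t (Suc j)) \<le> W (u j) + \<epsilon>) \<and>
      (f (t (Suc j)) < f (t j) \<longrightarrow> W (u j) - \<epsilon> \<le> f (t (Suc j)))"
    by metis
  show thesis
  proof (rule that[of u "\<lambda>j. if f (t j) < f (t (Suc j)) then W (u j) + \<epsilon> else W (u j) - \<epsilon>"])
    show "\<bar>(if f (t j) < f (t (Suc j)) then W (u j) + \<epsilon> else W (u j) - \<epsilon>) - W (u j)\<bar> \<le> \<epsilon>" for j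
      using \<open>0 < \<epsilon>\<close> by simp
  qed (use u in auto)
qed

lemma chain_in_sample_points:
  assumes t: "subdivision a b t n" and u: "\<And>j. j < n \<Longrightarrow> u j \<in> {t j<..t (Suc j)}"
    and js: "\<forall>s\<in>{1..m}. js s < n" "\<forall>s\<in>{1..<m}. js s < js (Suc s)"
  shows "chain_in a b (\<lambda>s. if s = 0 then a else u (js s)) m"
proof -
  have tm: "t i \<le> t j" if "i \<le> j" "j \<le> n" for i j
    using chain_mono[of n t i j] t that by (simp add: subdivision_def less_imp_le)
  have "(if s = 0 then a else u (js s)) \<le> u (js (Suc s))" if "s < m" for s
  proof (cases "s = 0")
    case True
    have "js 1 < n" using js that by auto
    then show ?thesis using True t u[of "js 1"] tm[of 0 "js 1"] by (force simp: subdivision_def)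
  next
    case False
    then have "js s < js (Suc s)" "js (Suc s) < n" using js that by auto
    then have "u (js s) \<le> t (Suc (js s))" "t (Suc (js s)) \<le> t (js (Suc s))" "t (js (Suc s)) < u (js (Suc s))"
      using u[of "js s"] u[of "js (Suc s)"] tm[of "Suc (js s)" "js (Suc s)"] by auto
    then show ?thesis using False by simp
  qed
  moreover have "u (js m) \<le> b" if "0 < m"
  proof -
    have "js m < n" using js that by auto
    then show ?thesis using u[of "js m"] tm[of "Suc (js m)" n] t by (auto simp: subdivision_def)
  qed
  ultimately show ?thesis using t tm[of 0 n] by (auto simp: chain_in_def subdivision_def)
qed

text \<open>The increments of \<open>f\<close> along a subdivision are dominated by those of a chain of
  overshoot points, and these lie within \<open>\<epsilon>\<close> of the values of \<open>W\<close> along a chain in \<open>[a,b]\<close>,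
  except that the chain starts at \<open>f a\<close> rather than at \<open>W a\<close>.\<close>
lemma lpnorm_increments_le_pushed:
  fixes f W :: "real \<Rightarrow> real"
  assumes p: "1 \<le> p" and t: "subdivision a b t n"
    and pushed: "\<And>j. j < n \<Longrightarrow> pushed_by f W (t j) (t (Suc j))"
    and chains: "\<And>q N. chain_in a b q N \<Longrightarrow> lpnorm p (increments W q) N \<le> V"
  shows "lpnorm p (increments f t) n \<le> \<bar>W a - f a\<bar> + V"
proof (rule field_le_epsilon)
  fix \<delta> :: real assume "0 < \<delta>"
  define \<epsilon> where "\<epsilon> = \<delta> / (2 * (real n + 1))"
  have "0 < \<epsilon>" using \<open>0 < \<delta>\<close> by (simp add: \<epsilon>_def)
  have tinc: "\<And>j. j < n \<Longrightarrow> t j < t (Suc j)" using t by (simp add: subdivision_def)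
  obtain u C where u: "\<And>j. j < n \<Longrightarrow> u j \<in> {t j<..t (Suc j)}" and C: "\<And>j. \<bar>C j - W (u j)\<bar> \<le> \<epsilon>"
    and over: "\<And>j. j < n \<Longrightarrow> (f (t j) < f (t (Suc j)) \<longrightarrow> f (t (Suc j)) \<le> C j)
        \<and> (f (t (Suc j)) < f (t j) \<longrightarrow> C j \<le> f (t (Suc j)))"
    using pushed_by_overshoot_points[of n f W t \<epsilon>, OF pushed tinc \<open>0 < \<epsilon>\<close>] by blast
  obtain m js where m: "m \<le> n" and js: "\<forall>s\<in>{1..m}. js s < n" "\<forall>s\<in>{1..<m}. js s < js (Suc s)"
    and dom: "psum p (increments (\<lambda>j. f (t j)) id) n
      \<le> psum p (increments (overshoot_chain (\<lambda>j. f (t j)) C js) id) m"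
    using psum_increments_le_overshoot_chain[of p n "\<lambda>j. f (t j)" C, OF p over] by blast
  define e where "e = overshoot_chain (\<lambda>j. f (t j)) C js"
  define q where "q s = (if s = 0 then a else u (js s))" for s
  have "e 0 = f a" "q 0 = a" "\<And>s. 0 < s \<Longrightarrow> \<bar>e s - W (q s)\<bar> \<le> \<epsilon>"
    using t C by (simp_all add: e_def q_def overshoot_chain_def subdivision_def)
  then have "lpnorm p (increments e id) m \<le> \<bar>W a - f a\<bar> + lpnorm p (increments W q) m + 2 * \<epsilon> * real m"
    using lpnorm_increments_perturbed_le[OF p, of \<epsilon> e "\<lambda>s. W (q s)" m] \<open>0 < \<epsilon>\<close>
    by (simp add: increments_comp_id)
  moreover have "lpnorm p (increments f t) n \<le> lpnorm p (increments e id) m"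
    using dom p by (intro lpnorm_le_lpnorm_of_psum_le) (simp_all add: e_def increments_comp_id)
  moreover have "lpnorm p (increments W q) m \<le> V"
    using chains chain_in_sample_points[OF t u js] unfolding q_def by blast
  moreover have "2 * \<epsilon> * real m \<le> 2 * \<epsilon> * (real n + 1)"
    using m \<open>0 < \<epsilon>\<close> by (intro mult_left_mono) auto
  moreover have "2 * \<epsilon> * (real n + 1) = \<delta>" by (simp add: \<epsilon>_def field_simps)
  ultimately show "lpnorm p (increments f t) n \<le> \<bar>W a - f a\<bar> + V + \<delta>" by linarith
qed

section \<open>Regulators of the Skorokhod problem\<close>

lemma right_continuous_mono_level_crossing:
  fixes F :: "real \<Rightarrow> real"
  assumes mono: "mono F" and rc: "\<And>s. continuous (at_right s) F" and "F t < c" "c < F t'"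
  obtains b where "t < b" "b \<le> t'" "c \<le> F b" "\<And>s. s < b \<Longrightarrow> F s < c"
proof -
  define L where "L = {s. F s < c}"
  have "t \<in> L" using \<open>F t < c\<close> by (simp add: L_def)
  have below_t': "s \<le> t'" if "s \<in> L" for s
    using that \<open>c < F t'\<close> monoD[OF mono, of t' s] by (force simp: L_def)
  then have bdd: "bdd_above L" by (rule bdd_aboveI)
  define b where "b = Sup L"
  have below: "F s < c" if "s < b" for s
  proof -
    obtain l where "l \<in> L" "s < l" using \<open>s < b\<close> less_cSup_iff[OF _ bdd] \<open>t \<in> L\<close> by (auto simp: b_def)
    then show ?thesis using monoD[OF mono, of s l] by (simp add: L_def)
  qed
  have "eventually (\<lambda>s. c \<le> F s) (at_right b)"
  proof -
    have "c \<le> F s" if "b < s" for s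
      using that cSup_upper[OF _ bdd, of s] by (force simp: L_def b_def)
    then show ?thesis by (simp add: eventually_at_right_less eventually_mono[OF eventually_at_right_less])
  qed
  then have "c \<le> F b"
    using rc[of b] by (intro tendsto_lowerbound[of F "F b"]) (auto simp: continuous_within)
  moreover have "t \<le> b" "b \<le> t'"
    using \<open>t \<in> L\<close> bdd below_t' by (auto simp: b_def intro: cSup_upper cSup_least)
  ultimately show thesis using that below \<open>F t < c\<close> by (metis le_less not_le)
qed

lemma interval_measure_Icc_ge:
  fixes F :: "real \<Rightarrow> real"
  assumes mono: "mono F" and rc: "\<And>s. continuous (at_right s) F"
    and "a \<le> b" and below: "\<And>s. s < a \<Longrightarrow> F s \<le> c"
  shows "ennreal (F b - c) \<le> emeasure (interval_measure F) {a..b}"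
proof -
  define A where "A n = {a - 1 / Suc n<..b}" for n :: nat
  have Ioc: "emeasure (interval_measure F) (A n) = ennreal (F b - F (a - 1 / Suc n))" for n
    using \<open>a \<le> b\<close> mono rc
    by (simp add: A_def emeasure_interval_measure_Ioc_eq mono_def order.trans[of _ a b])
  have "decseq A"
  proof (rule decseq_SucI)
    fix n
    have "1 / real (Suc (Suc n)) \<le> 1 / real (Suc n)" by (intro divide_left_mono) auto
    then show "A (Suc n) \<subseteq> A n" by (auto simp: A_def)
  qed
  have "(INF n. emeasure (interval_measure F) (A n)) = emeasure (interval_measure F) (\<Inter>n. A n)"
  proof (rule INF_emeasure_decseq[OF _ \<open>decseq A\<close>])
    show "range A \<subseteq> sets (interval_measure F)" by (auto simp: A_def)
  qed (simp add: Ioc)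
  also have "(\<Inter>n. A n) = {a..b}"
  proof (intro equalityI subsetI)
    fix s assume s: "s \<in> (\<Inter>n. A n)"
    have "a \<le> s"
    proof (rule ccontr)
      assume "\<not> a \<le> s"
      then obtain n where n: "1 / real (Suc n) < a - s"
        using reals_Archimedean[of "a - s"] by (auto simp: inverse_eq_divide)
      have "s \<in> A n" using s by blast
      then show False using n by (simp add: A_def)
    qed
    then show "s \<in> {a..b}" using s by (auto simp: A_def)
  qed (auto simp: A_def intro: less_le_trans[rotated])
  finally have "(INF n. emeasure (interval_measure F) (A n)) = emeasure (interval_measure F) {a..b}" .
  moreover have "ennreal (F b - c) \<le> emeasure (interval_measure F) (A n)" for n
    unfolding Ioc using below[of "a - 1 / Suc n"] by (intro ennreal_leI) simp
  ultimately show ?thesis by (metis INF_greatest)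
qed

lemma SP_regulator_le:
  assumes "SP l y x k" "0 \<le> a" "a \<le> b"
  shows "k a $ i \<le> k b $ i"
proof -
  have "mono_on {0..} (\<lambda>s. k s $ i)" using assms(1) by (simp add: SP_def)
  then show ?thesis using assms(2,3) by (auto intro: mono_onD)
qed

lemma SP_barrier_le:
  assumes "SP l y x k" "0 \<le> u"
  shows "l u $ i - y u $ i \<le> k u $ i"
proof -
  have "x u = y u + k u" "l u $ i \<le> x u $ i" using assms by (auto simp: SP_def)
  then show ?thesis by simp
qed

lemma SP_regulator_mono:
  assumes "SP l y x k"
  shows "mono (\<lambda>s. k (max s 0) $ i)"
  by (intro monoI SP_regulator_le[OF assms]) auto

lemma SP_regulator_right_continuous:
  assumes "SP l y x k"
  shows "continuous (at_right s) (\<lambda>s. k (max s 0) $ i)"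
proof (cases "s < 0")
  case True
  have "eventually (\<lambda>r. k (max r 0) $ i = k (max s 0) $ i) (at_right s)"
    unfolding eventually_at_right_field using True by (intro exI[of _ 0]) auto
  then show ?thesis unfolding continuous_within by (rule tendsto_eventually)
next
  case False
  have "((\<lambda>r. k r $ i) \<longlongrightarrow> k s $ i) (at_right s)"
    using assms False unfolding SP_def cadlag_def by (auto intro: tendsto_vec_nth)
  moreover have "eventually (\<lambda>r. k r $ i = k (max r 0) $ i) (at_right s)"
    using eventually_at_right_less[of s] by eventually_elim (use False in auto)
  ultimately show ?thesis
    using False unfolding continuous_within by (auto elim: Lim_transform_eventually)
qed

text \<open>Otherwise \<open>x - l \<ge> \<epsilon>/2\<close> from the time at which \<open>k\<close> has climbed to within \<open>\<epsilon>/2\<close> of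
  \<open>k t'\<close> up to \<open>t'\<close>, a set of positive \<open>dk\<close>-measure, contradicting \<open>\<integral>(x - l) dk = 0\<close>.\<close>
lemma SP_regulator_increase_near_barrier:
  fixes l y x k :: "real \<Rightarrow> real^'n"
  assumes SP: "SP l y x k" and t: "0 \<le> t" "t < t'" and inc: "k t $ i < k t' $ i" and "0 < \<epsilon>"
  shows "\<exists>u\<in>{t<..t'}. k t' $ i \<le> l u $ i - y u $ i + \<epsilon>"
proof (rule ccontr)
  assume far: "\<not> ?thesis"
  define F where "F = (\<lambda>s. k (max s 0) $ i)"
  have monoF: "mono F" using SP_regulator_mono[OF SP] by (simp add: F_def)
  have rcF: "\<And>s. continuous (at_right s) F" using SP_regulator_right_continuous[OF SP] by (simp add: F_def)
  define c where "c = max (k t' $ i - \<epsilon> / 2) ((k t $ i + k t' $ i) / 2)"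
  have "F t < c" "c < F t'" using inc \<open>0 < \<epsilon>\<close> t by (auto simp: F_def c_def less_max_iff_disj)
  then obtain b where b: "t < b" "b \<le> t'" "c \<le> F b" "\<And>s. s < b \<Longrightarrow> F s < c"
    using right_continuous_mono_level_crossing[OF monoF rcF] by metis
  have gap: "\<epsilon> / 2 \<le> x s $ i - l s $ i" if "s \<in> {b..t'}" for s
  proof -
    have "x s = y s + k s" using SP that t b by (simp add: SP_def)
    moreover have "c \<le> k s $ i"
      using that b t monoD[OF monoF, of b s] by (simp add: F_def)
    moreover have "s \<in> {t<..t'}" using that b by auto
    then have "l s $ i - y s $ i + \<epsilon> < k t' $ i" using far by (auto simp: not_le)
    ultimately show ?thesis by (simp add: c_def)
  qed
  have "0 < ennreal (F t' - c)" using \<open>c < F t'\<close> by simp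
  also have "\<dots> \<le> emeasure (interval_measure F) {b..t'}"
    using interval_measure_Icc_ge[OF monoF rcF \<open>b \<le> t'\<close>, of c] b(4) by (simp add: less_imp_le)
  finally have "0 < ennreal (\<epsilon> / 2) * emeasure (interval_measure F) {b..t'}"
    using \<open>0 < \<epsilon>\<close> by (simp add: ennreal_zero_less_mult_iff)
  also have "\<dots> = (\<integral>\<^sup>+ s. ennreal (\<epsilon> / 2) * indicator {b..t'} s \<partial>interval_measure F)"
    by (simp add: nn_integral_cmult_indicator)
  also have "\<dots> \<le> (\<integral>\<^sup>+ s. ennreal (x s $ i - l s $ i) * indicator {0<..t'} s \<partial>interval_measure F)"
    using gap t b by (intro nn_integral_mono) (auto simp: ennreal_leI split: split_indicator)
  also have "\<dots> = 0" using SP t by (simp add: SP_def F_def)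
  finally show False by simp
qed

lemma SP_pair_pushed_by:
  fixes l y x k l' y' x' k' :: "real \<Rightarrow> real^'n"
  assumes S: "SP l y x k" and S': "SP l' y' x' k'" and "0 \<le> a" "a < b"
  shows "pushed_by (\<lambda>s. k s $ i - k' s $ i) (\<lambda>s. (l s $ i - y s $ i) - (l' s $ i - y' s $ i)) a b"
proof -
  have up: "\<exists>u\<in>{a<..b}. k b $ i - k' b $ i \<le> (l u $ i - y u $ i) - (l' u $ i - y' u $ i) + \<epsilon>"
    if "0 < \<epsilon>" "k a $ i - k' a $ i < k b $ i - k' b $ i" for \<epsilon>
  proof -
    have "k a $ i < k b $ i" using that SP_regulator_le[OF S', of a b i] assms by simp
    then obtain u where u: "u \<in> {a<..b}" "k b $ i \<le> l u $ i - y u $ i + \<epsilon>"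
      using SP_regulator_increase_near_barrier[OF S _ _ _ \<open>0 < \<epsilon>\<close>] assms by blast
    have "0 \<le> u" "u \<le> b" using u(1) assms by auto
    then have "l' u $ i - y' u $ i \<le> k' b $ i"
      using SP_barrier_le[OF S', of u i] SP_regulator_le[OF S', of u b i] by linarith
    then show ?thesis using u by (intro bexI[of _ u]) linarith+
  qed
  have down: "\<exists>u\<in>{a<..b}. (l u $ i - y u $ i) - (l' u $ i - y' u $ i) - \<epsilon> \<le> k b $ i - k' b $ i"
    if "0 < \<epsilon>" "k b $ i - k' b $ i < k a $ i - k' a $ i" for \<epsilon>
  proof -
    have "k' a $ i < k' b $ i" using that SP_regulator_le[OF S, of a b i] assms by simp
    then obtain u where u: "u \<in> {a<..b}" "k' b $ i \<le> l' u $ i - y' u $ i + \<epsilon>"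
      using SP_regulator_increase_near_barrier[OF S' _ _ _ \<open>0 < \<epsilon>\<close>] assms by blast
    have "0 \<le> u" "u \<le> b" using u(1) assms by auto
    then have "l u $ i - y u $ i \<le> k b $ i"
      using SP_barrier_le[OF S, of u i] SP_regulator_le[OF S, of u b i] by linarith
    then show ?thesis using u by (intro bexI[of _ u]) linarith+
  qed
  show ?thesis unfolding pushed_by_def using up down by auto
qed

section \<open>Comparison of two Skorokhod problems\<close>

lemma SP_regulator_coordinate_increments_le:
  fixes l y x k l' y' x' k' :: "real \<Rightarrow> real^'n"
  assumes p: "1 \<le> p" and S: "SP l y x k" and S': "SP l' y' x' k'" and t: "subdivision 0 T t n"
    and Vy: "Vp p (\<lambda>t. y t - y' t) 0 T = ereal Vy" and Vl: "Vp p (\<lambda>t. l t - l' t) 0 T = ereal Vl"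
  shows "lpnorm p (increments (\<lambda>s. k s $ i - k' s $ i) t) n
    \<le> (norm (l 0 - l' 0) + norm (y 0 - y' 0)) + (Vl + Vy)"
proof -
  let ?W = "\<lambda>s. (l s - l' s) $ i - (y s - y' s) $ i"
  have T: "0 \<le> T" using chain_mono[of n t 0 n] t by (auto simp: subdivision_def less_imp_le)
  have "lpnorm p (increments (\<lambda>s. k s $ i - k' s $ i) t) n \<le> \<bar>?W 0 - (k 0 $ i - k' 0 $ i)\<bar> + (Vl + Vy)"
  proof (rule lpnorm_increments_le_pushed[OF p t])
    fix j assume "j < n"
    then have "0 \<le> t j" "t j < t (Suc j)"
      using chain_mono[of n t 0 j] t by (auto simp: subdivision_def less_imp_le)
    then show "pushed_by (\<lambda>s. k s $ i - k' s $ i) ?W (t j) (t (Suc j))"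
      using SP_pair_pushed_by[OF S S', of "t j" "t (Suc j)" i] by (simp add: algebra_simps)
  next
    fix q N assume q: "chain_in 0 T q N"
    have "lpnorm p (increments ?W q) N
        \<le> lpnorm p (increments (\<lambda>t. l t - l' t) q) N + lpnorm p (increments (\<lambda>t. y t - y' t) q) N"
      using lpnorm_increments_component_diff_le[OF p] .
    also have "\<dots> \<le> Vl + Vy"
      using lpnorm_increments_le_Vp[OF _ T Vl q] lpnorm_increments_le_Vp[OF _ T Vy q] p by simp
    finally show "lpnorm p (increments ?W q) N \<le> Vl + Vy" .
  qed
  also have "\<bar>?W 0 - (k 0 $ i - k' 0 $ i)\<bar> \<le> norm (l 0 - l' 0) + norm (y 0 - y' 0)"
    using S S' component_le_norm_cart[of "l 0 - l' 0" i] component_le_norm_cart[of "y 0 - y' 0" i]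
    by (simp add: SP_def)
  finally show ?thesis by simp
qed

lemma SP_regulator_difference_increments_le:
  fixes l y x k l' y' x' k' :: "real \<Rightarrow> real^'n"
  assumes p: "1 \<le> p" and S: "SP l y x k" and S': "SP l' y' x' k'" and t: "subdivision 0 T t n"
    and Vy: "Vp p (\<lambda>t. y t - y' t) 0 T = ereal Vy" and Vl: "Vp p (\<lambda>t. l t - l' t) 0 T = ereal Vl"
  shows "lpnorm p (increments (\<lambda>s. k s - k' s) t) n
    \<le> real CARD('n) * (Vy + norm (y 0 - y' 0) + Vl + norm (l 0 - l' 0))"
proof -
  have "lpnorm p (increments (\<lambda>s. k s - k' s) t) n
      \<le> (\<Sum>i\<in>UNIV. lpnorm p (increments (\<lambda>s. k s $ i - k' s $ i) t) n)"
    using lpnorm_increments_le_sum_components[OF p, of "\<lambda>s. k s - k' s"] by simp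
  also have "\<dots> \<le> (\<Sum>i\<in>(UNIV::'n set). (norm (l 0 - l' 0) + norm (y 0 - y' 0)) + (Vl + Vy))"
    by (intro sum_mono SP_regulator_coordinate_increments_le[OF p S S' t Vy Vl])
  finally show ?thesis by (simp add: algebra_simps)
qed

lemma SP_solution_difference_increments_le:
  fixes l y x k l' y' x' k' :: "real \<Rightarrow> real^'n"
  assumes p: "1 \<le> p" and S: "SP l y x k" and S': "SP l' y' x' k'" and t: "subdivision 0 T t n"
  shows "lpnorm p (increments (\<lambda>s. x s - x' s) t) n
    \<le> lpnorm p (increments (\<lambda>s. y s - y' s) t) n + lpnorm p (increments (\<lambda>s. k s - k' s) t) n"
proof -
  have "lpnorm p (increments (\<lambda>s. x s - x' s) t) n = lpnorm p (increments (\<lambda>s. (y s - y' s) + (k s - k' s)) t) n"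
    using S S' chain_mono[of n t 0] t
    by (intro lpnorm_cong) (auto simp: increments_def SP_def subdivision_def less_imp_le algebra_simps)
  then show ?thesis using lpnorm_increments_add_le[OF p] by simp
qed

text \<open>The hypotheses on \<open>l\<close>, \<open>y\<close>, \<open>l'\<close>, \<open>y'\<close> only guarantee that the two Skorokhod problems are
  solvable; the estimates use nothing but the relations \<open>SP\<close>.\<close>
theorem theorem2:
  fixes p :: real and T :: real
    and l y l' y' x k x' k' :: "real \<Rightarrow> real^'n"
  assumes "p \<ge> 1" and "T \<ge> 0"
    and "cadlag l" "cadlag y" "cadlag l'" "cadlag y'"
    and "\<forall>i. l 0 $ i \<le> y 0 $ i" and "\<forall>i. l' 0 $ i \<le> y' 0 $ i"
    and "SP l y x k" and "SP l' y' x' k'"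
  shows "(Vp p (\<lambda>t. x t - x' t) 0 T \<le>
           ereal (real CARD('n) + 1) * Vp p (\<lambda>t. y t - y' t) 0 T
           + ereal (real CARD('n) * norm (y 0 - y' 0))
           + ereal (real CARD('n)) * Vp p (\<lambda>t. l t - l' t) 0 T
           + ereal (real CARD('n) * norm (l 0 - l' 0))) \<and>
         (Vp p (\<lambda>t. k t - k' t) 0 T \<le>
           ereal (real CARD('n)) * Vp p (\<lambda>t. y t - y' t) 0 T
           + ereal (real CARD('n) * norm (y 0 - y' 0))
           + ereal (real CARD('n)) * Vp p (\<lambda>t. l t - l' t) 0 T
           + ereal (real CARD('n) * norm (l 0 - l' 0)))"
proof (cases "Vp p (\<lambda>t. y t - y' t) 0 T = \<infinity> \<or> Vp p (\<lambda>t. l t - l' t) 0 T = \<infinity>")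
  case True
  define Y L where "Y = Vp p (\<lambda>t. y t - y' t) 0 T" and "L = Vp p (\<lambda>t. l t - l' t) 0 T"
  have "0 \<le> Y" "0 \<le> L" by (simp_all add: Y_def L_def Vp_nonneg)
  then show ?thesis using True unfolding Y_def[symmetric] L_def[symmetric] by (cases Y; cases L) simp_all
next
  case False
  note p = \<open>1 \<le> p\<close> and S = \<open>SP l y x k\<close> and S' = \<open>SP l' y' x' k'\<close>
  obtain Vy Vl where Vy: "Vp p (\<lambda>t. y t - y' t) 0 T = ereal Vy" and Vl: "Vp p (\<lambda>t. l t - l' t) 0 T = ereal Vl"
    using False Vp_finite_imp_ereal by meson
  define B where "B = real CARD('n) * (Vy + norm (y 0 - y' 0) + Vl + norm (l 0 - l' 0))"
  have "0 \<le> B" using Vp_real_nonneg[OF Vy] Vp_real_nonneg[OF Vl] by (simp add: B_def)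
  have k_bound: "lpnorm p (increments (\<lambda>s. k s - k' s) t) n \<le> B" if "subdivision 0 T t n" for t n
    using SP_regulator_difference_increments_le[OF p S S' that Vy Vl] by (simp add: B_def)
  have y_bound: "lpnorm p (increments (\<lambda>s. y s - y' s) t) n \<le> Vy" if "subdivision 0 T t n" for t n
    using lpnorm_increments_le_Vp[OF _ \<open>0 \<le> T\<close> Vy subdivision_imp_chain_in[OF that]] p by simp
  have "Vp p (\<lambda>t. k t - k' t) 0 T \<le> ereal B"
    using k_bound p \<open>0 \<le> T\<close> \<open>0 \<le> B\<close> by (intro Vp_le_ereal) auto
  moreover have "Vp p (\<lambda>t. x t - x' t) 0 T \<le> ereal (Vy + B)"
    using SP_solution_difference_increments_le[OF p S S'] k_bound y_bound p \<open>0 \<le> T\<close> \<open>0 \<le> B\<close>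
      Vp_real_nonneg[OF Vy] by (intro Vp_le_ereal) (fastforce intro: order.trans add_mono)+
  ultimately show ?thesis unfolding Vy Vl by (simp add: B_def algebra_simps)
qed

end
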